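(* Let $F,G\colon(\mathcal{C},S)\to(\mathcal{D},S')$ be morphisms of quasi-schemoids. If $F\simeq G$, then $U(F)\simeq_S U(G)$. If moreover $(\mathcal{C},S)=K(\mathcal{C})$ is a discrete quasi-schemoid, then $F\simeq G$ if and only if $U(F)\simeq_S U(G)$.
   Context: A quasi-schemoid is a pair $(\mathcal{C},S)$ where $\mathcal{C}$ is a small category and $S$ is a partition of the set $mor(\mathcal{C})$ of all morphisms of $\mathcal{C}$ such that for all $\sigma,\tau,\mu\in S$ and all $f,g\in\mu$ the sets $\{(a,b)\in\sigma\times\tau : s(a)=t(b),\ a\circ b=f\}$ and $\{(a,b)\in\sigma\times\tau : s(a)=t(b),\ a\circ b=g\}$ have the same cardinality. A morphism of quasi-schemoids $(\mathcal{C},S)\to(\mathcal{D},S')$ is a functor $F\colon\mathcal{C}\to\mathcal{D}$ such that for every $\sigma\in S$ there is $\tau\in S'$ with $F(\sigma)\subset\tau$. $U$ denotes the forgetful functor from quasi-schemoids to small categories, $U(\mathcal{C},S)=\mathcal{C}$, and for a small category $\mathcal{C}$, $K(\mathcal{C})=(\mathcal{C},\{\{f\}\}_{f\in mor(\mathcal{C})})$ is the discrete quasi-schemoid. The product of quasi-schemoids is $(\mathcal{C},S)\times(\mathcal{E},S')=(\mathcal{C}\times\mathcal{E},\{\sigma\times\tau\})$. Let $[1]$ be the category with objects $0,1$ and one non-identity morphism $u\colon0\to1$, and $I=K([1])$. A homotopy $H\colon F\Rightarrow G$ between morphisms $F,G\colon(\mathcal{C},S)\to(\mathcal{D},S')$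 is a morphism of quasi-schemoids $H\colon(\mathcal{C},S)\times I\to(\mathcal{D},S')$ with $H\circ\varepsilon_0=F$, $H\circ\varepsilon_1=G$, where $\varepsilon_i(a)=(a,i)$, $\varepsilon_i(f)=(f,1_i)$. $F\sim G$ means there is a homotopy $F\Rightarrow G$ or $G\Rightarrow F$; $F\simeq G$ means there is a finite chain $F=F_0\sim F_1\sim\cdots\sim F_n=G$. The strong homotopy relation $\simeq_S$ on functors between small categories is defined in the same way, using functors $\mathcal{C}\times[1]\to\mathcal{D}$ (in the category of small categories) in place of morphisms $(\mathcal{C},S)\times I\to(\mathcal{D},S')$. *)

theory Defs
  imports Main "HOL-Library.Equipollence"
begin

record ('o, 'm) cat =
  cobj  :: "'o set"
  cmor  :: "'m set"
  cdom  :: "'m \<Rightarrow> 'o"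
  ccod  :: "'m \<Rightarrow> 'o"
  cid   :: "'o \<Rightarrow> 'm"
  ccomp :: "'m \<Rightarrow> 'm \<Rightarrow> 'm"  (* ccomp C g f = g \<circ> f, defined when cdom g = ccod f *)

definition category :: "('o, 'm) cat \<Rightarrow> bool" where
  "category C \<longleftrightarrow>
     (\<forall>f\<in>cmor C. cdom C f \<in> cobj C \<and> ccod C f \<in> cobj C) \<and>
     (\<forall>a\<in>cobj C. cid C a \<in> cmor C \<and> cdom C (cid C a) = a \<and> ccod C (cid C a) = a) \<and>
     (\<forall>f\<in>cmor C. \<forall>g\<in>cmor C. cdom C g = ccod C f \<longrightarrow>
        ccomp C g f \<in> cmor C \<and> cdom C (ccomp C g f) = cdom C f \<and> ccod C (ccomp C g f) = ccod C g) \<and>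
     (\<forall>f\<in>cmor C. ccomp C f (cid C (cdom C f)) = f \<and> ccomp C (cid C (ccod C f)) f = f) \<and>
     (\<forall>f\<in>cmor C. \<forall>g\<in>cmor C. \<forall>h\<in>cmor C. cdom C g = ccod C f \<longrightarrow> cdom C h = ccod C g \<longrightarrow>
        ccomp C h (ccomp C g f) = ccomp C (ccomp C h g) f)"

text \<open>A functor is a pair (object map, morphism map); only its values on the
  carrier matter.\<close>
type_synonym ('o1, 'm1, 'o2, 'm2) ftr = "('o1 \<Rightarrow> 'o2) \<times> ('m1 \<Rightarrow> 'm2)"

definition is_functor :: "('o1, 'm1) cat \<Rightarrow> ('o2, 'm2) cat \<Rightarrow> ('o1, 'm1, 'o2, 'm2) ftr \<Rightarrow> bool" where
  "is_functor C D F \<longleftrightarrow>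
     (\<forall>a\<in>cobj C. fst F a \<in> cobj D) \<and>
     (\<forall>f\<in>cmor C. snd F f \<in> cmor D \<and> cdom D (snd F f) = fst F (cdom C f) \<and>
                   ccod D (snd F f) = fst F (ccod C f)) \<and>
     (\<forall>a\<in>cobj C. snd F (cid C a) = cid D (fst F a)) \<and>
     (\<forall>f\<in>cmor C. \<forall>g\<in>cmor C. cdom C g = ccod C f \<longrightarrow>
        snd F (ccomp C g f) = ccomp D (snd F g) (snd F f))"

definition prod_cat :: "('o1, 'm1) cat \<Rightarrow> ('o2, 'm2) cat \<Rightarrow> ('o1 \<times> 'o2, 'm1 \<times> 'm2) cat" where
  "prod_cat C E =
     \<lparr> cobj = cobj C \<times> cobj E, cmor = cmor C \<times> cmor E,
       cdom = (\<lambda>(f, g). (cdom C f, cdom E g)),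
       ccod = (\<lambda>(f, g). (ccod C f, ccod E g)),
       cid = (\<lambda>(a, b). (cid C a, cid E b)),
       ccomp = (\<lambda>(f', g') (f, g). (ccomp C f' f, ccomp E g' g)) \<rparr>"

text \<open>The category [1]: objects 0, 1; morphisms (i,j) : i \<rightarrow> j for i \<le> j,
  so (0,0) = 1_0, (1,1) = 1_1, (0,1) = u.\<close>
definition cat_one :: "(nat, nat \<times> nat) cat" where
  "cat_one =
     \<lparr> cobj = {0, 1}, cmor = {(0,0), (1,1), (0,1)},
       cdom = fst, ccod = snd, cid = (\<lambda>i. (i, i)),
       ccomp = (\<lambda>g f. (fst f, snd g)) \<rparr>"

definition comp_pairs :: "('o, 'm) cat \<Rightarrow> 'm set \<Rightarrow> 'm set \<Rightarrow> 'm \<Rightarrow> ('m \<times> 'm) set" where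
  "comp_pairs C \<sigma> \<tau> f = {(a, b) \<in> \<sigma> \<times> \<tau>. cdom C a = ccod C b \<and> ccomp C a b = f}"

definition is_partition :: "'a set set \<Rightarrow> 'a set \<Rightarrow> bool" where
  "is_partition S X \<longleftrightarrow> (\<forall>\<sigma>\<in>S. \<sigma> \<noteq> {}) \<and> \<Union>S = X \<and>
     (\<forall>\<sigma>\<in>S. \<forall>\<tau>\<in>S. \<sigma> \<noteq> \<tau> \<longrightarrow> \<sigma> \<inter> \<tau> = {})"

definition quasi_schemoid :: "('o, 'm) cat \<Rightarrow> 'm set set \<Rightarrow> bool" where
  "quasi_schemoid C S \<longleftrightarrow> category C \<and> is_partition S (cmor C) \<and>
     (\<forall>\<sigma>\<in>S. \<forall>\<tau>\<in>S. \<forall>\<mu>\<in>S. \<forall>f\<in>\<mu>. \<forall>g\<in>\<mu>. comp_pairs C \<sigma> \<tau> f \<approx> comp_pairs C \<sigma> \<tau> g)"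

definition qs_morphism :: "('o1, 'm1) cat \<Rightarrow> 'm1 set set \<Rightarrow> ('o2, 'm2) cat \<Rightarrow> 'm2 set set
    \<Rightarrow> ('o1, 'm1, 'o2, 'm2) ftr \<Rightarrow> bool" where
  "qs_morphism C S D S' F \<longleftrightarrow> is_functor C D F \<and> (\<forall>\<sigma>\<in>S. \<exists>\<tau>\<in>S'. snd F ` \<sigma> \<subseteq> \<tau>)"

definition discrete_part :: "('o, 'm) cat \<Rightarrow> 'm set set" where
  "discrete_part C = {{f} | f. f \<in> cmor C}"

definition prod_part :: "'m1 set set \<Rightarrow> 'm2 set set \<Rightarrow> ('m1 \<times> 'm2) set set" where
  "prod_part S S' = {\<sigma> \<times> \<tau> | \<sigma> \<tau>. \<sigma> \<in> S \<and> \<tau> \<in> S'}"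

definition restr_end :: "('o1, 'm1) cat \<Rightarrow> ('o1 \<times> nat, 'm1 \<times> (nat \<times> nat), 'o2, 'm2) ftr
    \<Rightarrow> nat \<Rightarrow> ('o1, 'm1, 'o2, 'm2) ftr \<Rightarrow> bool" where
  "restr_end C H i F \<longleftrightarrow> (\<forall>a\<in>cobj C. fst H (a, i) = fst F a) \<and>
                         (\<forall>f\<in>cmor C. snd H (f, (i, i)) = snd F f)"

definition qs_homotopy :: "('o1, 'm1) cat \<Rightarrow> 'm1 set set \<Rightarrow> ('o2, 'm2) cat \<Rightarrow> 'm2 set set
    \<Rightarrow> ('o1 \<times> nat, 'm1 \<times> (nat \<times> nat), 'o2, 'm2) ftr
    \<Rightarrow> ('o1, 'm1, 'o2, 'm2) ftr \<Rightarrow> ('o1, 'm1, 'o2, 'm2) ftr \<Rightarrow> bool" where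
  "qs_homotopy C S D S' H F G \<longleftrightarrow>
     qs_morphism (prod_cat C cat_one) (prod_part S (discrete_part cat_one)) D S' H \<and>
     restr_end C H 0 F \<and> restr_end C H 1 G"

definition qs_sim :: "('o1, 'm1) cat \<Rightarrow> 'm1 set set \<Rightarrow> ('o2, 'm2) cat \<Rightarrow> 'm2 set set
    \<Rightarrow> ('o1, 'm1, 'o2, 'm2) ftr \<Rightarrow> ('o1, 'm1, 'o2, 'm2) ftr \<Rightarrow> bool" where
  "qs_sim C S D S' F G \<longleftrightarrow> qs_morphism C S D S' F \<and> qs_morphism C S D S' G \<and>
     (\<exists>H. qs_homotopy C S D S' H F G \<or> qs_homotopy C S D S' H G F)"

definition qs_htpy_equiv :: "('o1, 'm1) cat \<Rightarrow> 'm1 set set \<Rightarrow> ('o2, 'm2) cat \<Rightarrow> 'm2 set set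
    \<Rightarrow> ('o1, 'm1, 'o2, 'm2) ftr \<Rightarrow> ('o1, 'm1, 'o2, 'm2) ftr \<Rightarrow> bool" where
  "qs_htpy_equiv C S D S' = (qs_sim C S D S')\<^sup>*\<^sup>*"

definition cat_homotopy :: "('o1, 'm1) cat \<Rightarrow> ('o2, 'm2) cat
    \<Rightarrow> ('o1 \<times> nat, 'm1 \<times> (nat \<times> nat), 'o2, 'm2) ftr
    \<Rightarrow> ('o1, 'm1, 'o2, 'm2) ftr \<Rightarrow> ('o1, 'm1, 'o2, 'm2) ftr \<Rightarrow> bool" where
  "cat_homotopy C D H F G \<longleftrightarrow>
     is_functor (prod_cat C cat_one) D H \<and> restr_end C H 0 F \<and> restr_end C H 1 G"

definition cat_sim :: "('o1, 'm1) cat \<Rightarrow> ('o2, 'm2) cat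
    \<Rightarrow> ('o1, 'm1, 'o2, 'm2) ftr \<Rightarrow> ('o1, 'm1, 'o2, 'm2) ftr \<Rightarrow> bool" where
  "cat_sim C D F G \<longleftrightarrow> is_functor C D F \<and> is_functor C D G \<and>
     (\<exists>H. cat_homotopy C D H F G \<or> cat_homotopy C D H G F)"

definition strong_htpy_equiv :: "('o1, 'm1) cat \<Rightarrow> ('o2, 'm2) cat
    \<Rightarrow> ('o1, 'm1, 'o2, 'm2) ftr \<Rightarrow> ('o1, 'm1, 'o2, 'm2) ftr \<Rightarrow> bool" where
  "strong_htpy_equiv C D = (cat_sim C D)\<^sup>*\<^sup>*"

end

theory Submission
  imports Defs
begin

text \<open>A homotopy of quasi-schemoids is in particular a functor out of the product category, so
  each step of a chain for \<open>\<simeq>\<close> is a step for \<open>\<simeq>\<^sub>S\<close>. Conversely, on a discrete source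
  every functor is a morphism of quasi-schemoids, and \<open>K(C) \<times> I = K(C \<times> [1])\<close>, so every
  strong homotopy is already a homotopy of quasi-schemoids.\<close>

lemma qs_sim_imp_cat_sim: "qs_sim C S D S' F G \<Longrightarrow> cat_sim C D F G"
  unfolding qs_sim_def cat_sim_def qs_homotopy_def cat_homotopy_def qs_morphism_def
  by blast

lemma qs_morphism_discrete_part:
  assumes "is_partition S' (cmor D)" and "is_functor C D F"
  shows "qs_morphism C (discrete_part C) D S' F"
  unfolding qs_morphism_def
proof (intro conjI ballI)
  fix \<sigma> assume "\<sigma> \<in> discrete_part C"
  then obtain f where f: "\<sigma> = {f}" "f \<in> cmor C"
    unfolding discrete_part_def by blast
  then have "snd F f \<in> cmor D"
    using assms(2) unfolding is_functor_def by blast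
  then obtain \<tau> where "\<tau> \<in> S'" "snd F f \<in> \<tau>"
    using assms(1) unfolding is_partition_def by blast
  then show "\<exists>\<tau>\<in>S'. snd F ` \<sigma> \<subseteq> \<tau>"
    using f by blast
qed (fact assms(2))

lemma prod_part_discrete_part:
  "prod_part (discrete_part C) (discrete_part E) = discrete_part (prod_cat C E)"
  unfolding prod_part_def discrete_part_def prod_cat_def by auto

lemma cat_sim_imp_qs_sim_discrete:
  assumes "is_partition S' (cmor D)" and "cat_sim C D F G"
  shows "qs_sim C (discrete_part C) D S' F G"
  using assms qs_morphism_discrete_part[OF assms(1)] prod_part_discrete_part
  unfolding qs_sim_def cat_sim_def qs_homotopy_def cat_homotopy_def
  by metis

lemma qs_htpy_equiv_imp_strong_htpy_equiv:
  "qs_htpy_equiv C S D S' F G \<Longrightarrow> strong_htpy_equiv C D F G"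
  unfolding qs_htpy_equiv_def strong_htpy_equiv_def
  by (rule rtranclp_mono[THEN predicate2D, rotated]) (auto intro: qs_sim_imp_cat_sim)

lemma strong_htpy_equiv_imp_qs_htpy_equiv_discrete:
  assumes "is_partition S' (cmor D)" and "strong_htpy_equiv C D F G"
  shows "qs_htpy_equiv C (discrete_part C) D S' F G"
  using assms(2) unfolding qs_htpy_equiv_def strong_htpy_equiv_def
  by (rule rtranclp_mono[THEN predicate2D, rotated])
    (auto intro: cat_sim_imp_qs_sim_discrete[OF assms(1)])

theorem proposition3p5:
  fixes C :: "('o1, 'm1) cat" and D :: "('o2, 'm2) cat"
    and S :: "'m1 set set" and S' :: "'m2 set set"
    and F G :: "('o1, 'm1, 'o2, 'm2) ftr"
  assumes "quasi_schemoid C S" and "quasi_schemoid D S'"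
    and "qs_morphism C S D S' F" and "qs_morphism C S D S' G"
  shows "(qs_htpy_equiv C S D S' F G \<longrightarrow> strong_htpy_equiv C D F G)
       \<and> (S = discrete_part C \<longrightarrow> (qs_htpy_equiv C S D S' F G \<longleftrightarrow> strong_htpy_equiv C D F G))"
proof -
  have "is_partition S' (cmor D)"
    using assms(2) unfolding quasi_schemoid_def by blast
  then show ?thesis
    using qs_htpy_equiv_imp_strong_htpy_equiv strong_htpy_equiv_imp_qs_htpy_equiv_discrete
    by blast
qed

end
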